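(* For any simple graph $G$ with at least one edge, $$\chi_f(G) \geq \xi_f(G) \geq 1 + \max\left\{\frac{n^+}{n^-}, \frac{n^-}{n^+}\right\},$$ where $n^+$ and $n^-$ are the numbers (with multiplicity) of positive and negative eigenvalues of the adjacency matrix of $G$.
   Context: Fractional chromatic number $\chi_f(G)$: the minimum of $\sum_{J} \sigma_J$ over all maps $\sigma$ from the set of independent sets of $G$ to $\mathbb{R}_{\ge 0}$ such that $\sum_{J \ni v} \sigma_J \ge 1$ for every vertex $v$. A $d/r$-representation of $G$ is a family of rank-$r$ orthogonal projectors $P_v \in \mathbb{C}^{d\times d}$, $v \in V(G)$, with $P_vP_w = O$ for every edge $vw$; the projective rank is $\xi_f(G) = \inf\{d/r : G \text{ has a } d/r\text{-representation}\}$. *)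

theory Defs
  imports "Jordan_Normal_Form.Schur_Decomposition" "Jordan_Normal_Form.DL_Rank"
    "Jordan_Normal_Form.Char_Poly"
begin

definition simple_graph :: "nat \<Rightarrow> (nat \<Rightarrow> nat \<Rightarrow> bool) \<Rightarrow> bool" where
  "simple_graph n E \<longleftrightarrow> (\<forall>i j. E i j \<longrightarrow> i < n \<and> j < n \<and> i \<noteq> j \<and> E j i)"

definition indep_sets :: "nat \<Rightarrow> (nat \<Rightarrow> nat \<Rightarrow> bool) \<Rightarrow> nat set set" where
  "indep_sets n E = {J. J \<subseteq> {0..<n} \<and> (\<forall>u\<in>J. \<forall>w\<in>J. \<not> E u w)}"

definition frac_chromatic :: "nat \<Rightarrow> (nat \<Rightarrow> nat \<Rightarrow> bool) \<Rightarrow> real" where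
  "frac_chromatic n E = Inf {(\<Sum>J\<in>indep_sets n E. \<sigma> J) | \<sigma>.
      (\<forall>J\<in>indep_sets n E. \<sigma> J \<ge> 0) \<and>
      (\<forall>v<n. (\<Sum>J\<in>{J\<in>indep_sets n E. v \<in> J}. \<sigma> J) \<ge> 1)}"

definition orth_projector :: "nat \<Rightarrow> complex mat \<Rightarrow> bool" where
  "orth_projector d P \<longleftrightarrow> P \<in> carrier_mat d d \<and> mat_adjoint P = P \<and> P * P = P"

definition dr_representation :: "nat \<Rightarrow> (nat \<Rightarrow> nat \<Rightarrow> bool) \<Rightarrow> nat \<Rightarrow> nat \<Rightarrow> (nat \<Rightarrow> complex mat) \<Rightarrow> bool" where
  "dr_representation n E d r P \<longleftrightarrow>
     (\<forall>v<n. orth_projector d (P v) \<and> vec_space.rank d (P v) = r) \<and>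
     (\<forall>v w. v < n \<longrightarrow> w < n \<longrightarrow> E v w \<longrightarrow> P v * P w = 0\<^sub>m d d)"

definition projective_rank :: "nat \<Rightarrow> (nat \<Rightarrow> nat \<Rightarrow> bool) \<Rightarrow> real" where
  "projective_rank n E = Inf {real d / real r | d r. r > 0 \<and> (\<exists>P. dr_representation n E d r P)}"

definition adjacency_matrix :: "nat \<Rightarrow> (nat \<Rightarrow> nat \<Rightarrow> bool) \<Rightarrow> real mat" where
  "adjacency_matrix n E = mat n n (\<lambda>(i, j). if E i j then 1 else 0)"

definition n_pos_eig :: "real mat \<Rightarrow> nat" where
  "n_pos_eig A = (\<Sum>x\<in>{x. x > 0 \<and> poly (char_poly A) x = 0}. order x (char_poly A))"

definition n_neg_eig :: "real mat \<Rightarrow> nat" where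
  "n_neg_eig A = (\<Sum>x\<in>{x. x < 0 \<and> poly (char_poly A) x = 0}. order x (char_poly A))"

end

theory Submission
  imports Defs "Jordan_Normal_Form.Jordan_Normal_Form_Uniqueness"
    "Jordan_Normal_Form.Jordan_Normal_Form_Existence"
begin

section \<open>Injective linear maps\<close>

lemma le_of_injective_linear_map:
  fixes g :: "nat \<Rightarrow> nat \<Rightarrow> 'a::field"
  assumes inj: "\<And>c. (\<forall>i<M. (\<Sum>j<N. g i j * c j) = 0) \<Longrightarrow> \<forall>j<N. c j = 0"
  shows "N \<le> M"
proof (rule ccontr)
  assume "\<not> N \<le> M"
  hence MN: "M < N" by simp
  define G where "G = mat N N (\<lambda>(i,j). if i < M then g i j else 0)"
  have G: "G \<in> carrier_mat N N" by (simp add: G_def)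
  have "det G = 0"
  proof -
    have "(\<Prod>i\<in>{0..<N}. G $$ (i, p i)) = 0" if p: "p permutes {0..<N}" for p
      by (rule prod_zero[OF _ bexI[of _ M]]) (use MN p in \<open>auto simp: G_def permutes_in_image\<close>)
    then show ?thesis unfolding det_def using G by (simp, intro sum.neutral) auto
  qed
  then obtain v where v: "v \<in> carrier_vec N" "v \<noteq> 0\<^sub>v N" "G *\<^sub>v v = 0\<^sub>v N"
    using det_0_iff_vec_prod_zero_field[OF G] by auto
  have "\<forall>i<M. (\<Sum>j<N. g i j * v $ j) = 0"
  proof (intro allI impI)
    fix i assume i: "i < M"
    have "(G *\<^sub>v v) $ i = 0" using v(3) i MN by simp
    thus "(\<Sum>j<N. g i j * v $ j) = 0" using i MN v(1)
      by (simp add: G_def scalar_prod_def lessThan_atLeast0)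
  qed
  from inj[OF this] have "v = 0\<^sub>v N" using v(1) by (intro eq_vecI) auto
  with v(2) show False by simp
qed

lemma card_le_of_injective_linear_map:
  fixes g :: "'i \<Rightarrow> 'j \<Rightarrow> 'a::field"
  assumes "finite I" and "finite J"
    and inj: "\<And>c. (\<forall>i\<in>I. (\<Sum>j\<in>J. g i j * c j) = 0) \<Longrightarrow> \<forall>j\<in>J. c j = 0"
  shows "card J \<le> card I"
proof -
  obtain fi where fi: "bij_betw fi {0..<card I} I" using ex_bij_betw_nat_finite[OF \<open>finite I\<close>] by blast
  obtain fj where fj: "bij_betw fj {0..<card J} J" using ex_bij_betw_nat_finite[OF \<open>finite J\<close>] by blast
  show ?thesis
  proof (rule le_of_injective_linear_map[where g = "\<lambda>i j. g (fi i) (fj j)"])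
    fix c :: "nat \<Rightarrow> 'a"
    assume c: "\<forall>i<card I. (\<Sum>j<card J. g (fi i) (fj j) * c j) = 0"
    define c' where "c' y = c (inv_into {0..<card J} fj y)" for y
    have reindex: "(\<Sum>j\<in>J. g x j * c' j) = (\<Sum>j<card J. g x (fj j) * c j)" for x
    proof -
      have "(\<Sum>j\<in>J. g x j * c' j) = (\<Sum>j\<in>{0..<card J}. g x (fj j) * c' (fj j))"
        using sum.reindex_bij_betw[OF fj, of "\<lambda>j. g x j * c' j"] by simp
      also have "\<dots> = (\<Sum>j<card J. g x (fj j) * c j)"
        unfolding c'_def lessThan_atLeast0
        by (rule sum.cong) (auto simp: bij_betw_inv_into_left[OF fj])
      finally show ?thesis .
    qed
    have "\<forall>x\<in>I. (\<Sum>j\<in>J. g x j * c' j) = 0"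
    proof
      fix x assume "x \<in> I"
      then obtain i where "i < card I" "x = fi i" using fi by (force simp: bij_betw_def)
      thus "(\<Sum>j\<in>J. g x j * c' j) = 0" using c reindex by simp
    qed
    from inj[OF this] show "\<forall>j<card J. c j = 0"
      unfolding c'_def using fj by (metis atLeastLessThan_iff bij_betwE bij_betw_inv_into_left zero_le)
  qed
qed

section \<open>Real symmetric matrices\<close>

definition norm2 :: "nat \<Rightarrow> (nat \<Rightarrow> complex) \<Rightarrow> complex" where
  "norm2 n y = (\<Sum>u<n. cnj (y u) * y u)"

definition qform :: "nat \<Rightarrow> (nat \<Rightarrow> nat \<Rightarrow> real) \<Rightarrow> (nat \<Rightarrow> complex) \<Rightarrow> complex" where
  "qform n a y = (\<Sum>u<n. \<Sum>w<n. of_real (a u w) * (cnj (y u) * y w))"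

lemma norm2_eq_of_real: "norm2 n y = of_real (\<Sum>u<n. (cmod (y u))\<^sup>2)"
  unfolding norm2_def of_real_sum by (intro sum.cong refl) (metis complex_norm_square mult.commute)

lemma norm2_eq_0_iff: "norm2 n y = 0 \<longleftrightarrow> (\<forall>u<n. y u = 0)"
proof -
  have "norm2 n y = 0 \<longleftrightarrow> (\<Sum>u<n. (cmod (y u))\<^sup>2) = 0"
    by (simp only: norm2_eq_of_real of_real_eq_0_iff)
  also have "\<dots> \<longleftrightarrow> (\<forall>u<n. y u = 0)" by (subst sum_nonneg_eq_0_iff) auto
  finally show ?thesis .
qed

lemma cnj_qform:
  fixes a :: "nat \<Rightarrow> nat \<Rightarrow> real"
  assumes sym: "\<And>u w. u < n \<Longrightarrow> w < n \<Longrightarrow> a u w = a w u"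
  shows "cnj (qform n a y) = qform n a y"
proof -
  have "cnj (qform n a y) = (\<Sum>u<n. \<Sum>w<n. of_real (a u w) * (y u * cnj (y w)))"
    unfolding qform_def by simp
  also have "\<dots> = (\<Sum>w<n. \<Sum>u<n. of_real (a u w) * (y u * cnj (y w)))" by (rule sum.swap)
  also have "\<dots> = qform n a y"
    unfolding qform_def using sym by (intro sum.cong refl) (simp add: mult.commute)
  finally show ?thesis .
qed

lemma symmetric_eigenvalue_real:
  fixes a :: "nat \<Rightarrow> nat \<Rightarrow> real" and y :: "nat \<Rightarrow> complex"
  assumes sym: "\<And>u w. u < n \<Longrightarrow> w < n \<Longrightarrow> a u w = a w u"
    and eigen: "\<And>u. u < n \<Longrightarrow> (\<Sum>w<n. of_real (a u w) * y w) = c * y u"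
    and nonzero: "\<exists>u<n. y u \<noteq> 0"
  shows "Im c = 0"
proof -
  have "c * norm2 n y = (\<Sum>u<n. cnj (y u) * (c * y u))"
    unfolding norm2_def by (simp add: sum_distrib_left ac_simps)
  also have "\<dots> = (\<Sum>u<n. cnj (y u) * (\<Sum>w<n. of_real (a u w) * y w))"
    by (intro sum.cong refl) (simp add: eigen)
  also have "\<dots> = qform n a y"
    unfolding qform_def by (simp add: sum_distrib_left ac_simps)
  finally have c_norm2: "c * norm2 n y = qform n a y" .
  obtain s where s: "norm2 n y = of_real s" using norm2_eq_of_real by blast
  have "s \<noteq> 0" using norm2_eq_0_iff[of n y] nonzero s by auto
  have "Im c * s = Im (c * norm2 n y)" using s by simp
  also have "\<dots> = Im (qform n a y)" using c_norm2 by simp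
  also have "\<dots> = 0" using arg_cong[where f = Im, OF cnj_qform[OF sym, where y = y]] by simp
  finally show ?thesis using \<open>s \<noteq> 0\<close> by simp
qed

lemma symmetric_char_kernel_square:
  fixes a :: "nat \<Rightarrow> nat \<Rightarrow> real" and c :: complex and v y :: "nat \<Rightarrow> complex"
  defines "b u w \<equiv> of_real (a u w) - (if u = w then c else 0)"
  assumes sym: "\<And>u w. u < n \<Longrightarrow> w < n \<Longrightarrow> a u w = a w u"
    and y: "\<And>u. u < n \<Longrightarrow> y u = (\<Sum>w<n. b u w * v w)"
    and b_y: "\<And>u. u < n \<Longrightarrow> (\<Sum>w<n. b u w * y w) = 0"
  shows "\<forall>u<n. y u = 0"
proof (rule ccontr)
  assume "\<not> (\<forall>u<n. y u = 0)"
  hence nonzero: "\<exists>u<n. y u \<noteq> 0" by auto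
  have eigen: "(\<Sum>w<n. of_real (a u w) * y w) = c * y u" if "u < n" for u
    using b_y[OF that] that
    by (simp add: b_def left_diff_distrib sum_subtractf if_distrib[of "\<lambda>x. x * _"] sum.delta
        cong: if_cong)
  have "Im c = 0" using symmetric_eigenvalue_real[of n a y c] sym eigen nonzero by blast
  hence b_herm: "cnj (b u w) = b w u" if "u < n" "w < n" for u w
    using sym[OF that] by (simp add: b_def complex_eq_iff)
  have "norm2 n y = (\<Sum>u<n. cnj (y u) * (\<Sum>w<n. b u w * v w))"
    unfolding norm2_def by (intro sum.cong refl) (metis lessThan_iff y)
  also have "\<dots> = (\<Sum>u<n. \<Sum>w<n. v w * (b u w * cnj (y u)))"
    by (simp add: sum_distrib_left ac_simps)
  also have "\<dots> = (\<Sum>w<n. \<Sum>u<n. v w * (b u w * cnj (y u)))"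
    by (rule sum.swap)
  also have "\<dots> = (\<Sum>w<n. v w * cnj (\<Sum>u<n. b w u * y u))"
    by (intro sum.cong refl) (auto simp: sum_distrib_left cnj_sum b_herm intro!: sum.cong)
  also have "\<dots> = 0" using b_y by simp
  finally have "norm2 n y = 0" .
  with nonzero show False by (auto simp: norm2_eq_0_iff)
qed

lemma char_matrix_kernel_square:
  fixes A :: "real mat" and c :: complex
  assumes A: "A \<in> carrier_mat n n" and sym: "\<And>i j. i < n \<Longrightarrow> j < n \<Longrightarrow> A $$ (i,j) = A $$ (j,i)"
  shows "mat_kernel (char_matrix (map_mat of_real A) c ^\<^sub>m 2) =
    mat_kernel (char_matrix (map_mat of_real A) c ^\<^sub>m 1)"
proof -
  define B where "B = char_matrix (map_mat complex_of_real A) c"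
  have B: "B \<in> carrier_mat n n" unfolding B_def using A by simp
  have B_index: "B $$ (u,w) = of_real (A $$ (u,w)) - (if u = w then c else 0)"
    if "u < n" "w < n" for u w
    using that A by (simp add: B_def char_matrix_def)
  have B_mult_vec: "(B *\<^sub>v v) $ u = (\<Sum>w<n. (of_real (A $$ (u,w)) - (if u = w then c else 0)) * v $ w)"
    if "u < n" "v \<in> carrier_vec n" for u v
    using that B by (simp add: scalar_prod_def B_index lessThan_atLeast0 mult.commute)
  have "v \<in> mat_kernel (B * B) \<longleftrightarrow> v \<in> mat_kernel B" for v
  proof
    assume "v \<in> mat_kernel (B * B)"
    hence v: "v \<in> carrier_vec n" and "(B * B) *\<^sub>v v = 0\<^sub>v n" using B by (auto simp: mat_kernel_def)
    hence BBv: "B *\<^sub>v (B *\<^sub>v v) = 0\<^sub>v n" using B by (simp add: assoc_mult_mat_vec)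
    have "\<forall>u<n. (B *\<^sub>v v) $ u = 0"
    proof (rule symmetric_char_kernel_square[where a = "\<lambda>u w. A $$ (u,w)" and v = "\<lambda>w. v $ w"])
      show "(B *\<^sub>v v) $ u = (\<Sum>w<n. (of_real (A $$ (u, w)) - (if u = w then c else 0)) * v $ w)"
        if "u < n" for u
        using B_mult_vec that v by simp
      show "(\<Sum>w<n. (of_real (A $$ (u, w)) - (if u = w then c else 0)) * (B *\<^sub>v v) $ w) = 0"
        if "u < n" for u
        using B_mult_vec[OF that, of "B *\<^sub>v v"] BBv B v that by simp
    qed (use sym in auto)
    hence "B *\<^sub>v v = 0\<^sub>v n" using B by (intro eq_vecI) auto
    thus "v \<in> mat_kernel B" using v B by (auto simp: mat_kernel_def)
  next
    assume "v \<in> mat_kernel B"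
    hence v: "v \<in> carrier_vec n" and Bv: "B *\<^sub>v v = 0\<^sub>v n" using B by (auto simp: mat_kernel_def)
    have "(B * B) *\<^sub>v v = B *\<^sub>v (B *\<^sub>v v)" using B v by (simp add: assoc_mult_mat_vec)
    also have "\<dots> = 0\<^sub>v n" using Bv B by (intro eq_vecI) (auto simp: row_def)
    finally show "v \<in> mat_kernel (B * B)" using v B by (auto simp: mat_kernel_def)
  qed
  moreover have "B ^\<^sub>m 2 = B * B" "B ^\<^sub>m 1 = B" using B by (simp_all add: numeral_2_eq_2)
  ultimately show ?thesis unfolding B_def[symmetric] by auto
qed

lemma eq_if_sum_list_eq_and_le:
  fixes f g :: "'a \<Rightarrow> nat"
  assumes "\<forall>x\<in>set xs. f x \<le> g x" and "sum_list (map f xs) = sum_list (map g xs)"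
  shows "\<forall>x\<in>set xs. f x = g x"
  using assms
proof (induction xs)
  case (Cons y ys)
  have "sum_list (map f ys) \<le> sum_list (map g ys)"
    using Cons.prems(1) by (intro sum_list_mono) auto
  with Cons.prems have "f y = g y" by auto
  with Cons show ?case by auto
qed simp

text \<open>Symmetry makes the generalised eigenspaces of order 2 and 1 agree, which by the
  dimension formula for Jordan normal forms rules out blocks of size 2 or more.\<close>

lemma jordan_nf_symmetric_block_size:
  fixes A :: "real mat" and c :: complex
  assumes A: "A \<in> carrier_mat n n" and sym: "\<And>i j. i < n \<Longrightarrow> j < n \<Longrightarrow> A $$ (i,j) = A $$ (j,i)"
    and jnf: "jordan_nf (map_mat of_real A) n_as" and block: "(k, c) \<in> set n_as"
  shows "k = 1"
proof -
  let ?ks = "map fst [(m, e)\<leftarrow>n_as. e = c]"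
  have "dim_gen_eigenspace (map_mat of_real A) c 2 = dim_gen_eigenspace (map_mat of_real A) c 1"
    using char_matrix_kernel_square[OF A sym, of c]
    unfolding dim_gen_eigenspace_def kernel_dim_def by simp
  hence "sum_list (map (min 1) ?ks) = sum_list (map (min 2) ?ks)"
    unfolding dim_gen_eigenspace[OF jnf] by simp
  hence "\<forall>x\<in>set ?ks. min 1 x = min 2 x" by (intro eq_if_sum_list_eq_and_le) auto
  moreover have "k \<in> set ?ks" using block by force
  ultimately have "k \<le> 1" by (metis min_def numeral_le_one_iff semiring_norm(69) nle_le)
  moreover have "k \<noteq> 0" using jnf block unfolding jordan_nf_def by force
  ultimately show "k = 1" by simp
qed

lemma jordan_matrix_trivial_blocks:
  "jordan_matrix (map (\<lambda>c. (1::nat, c)) cs) =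
    mat (length cs) (length cs) (\<lambda>(i,j). if i = j then cs ! i else (0::'a::{zero,one}))"
proof (induction cs)
  case Nil
  show ?case by (auto simp: jordan_matrix_def diag_block_mat.simps intro!: eq_matI)
next
  case (Cons c cs)
  have "sum_list (map fst (map (\<lambda>c. (1::nat, c)) cs)) = length cs"
    by (induction cs) auto
  thus ?case
    unfolding list.map jordan_matrix_Cons Cons
    by (intro eq_matI) (auto simp: nth_Cons' jordan_block_index)
qed

lemma symmetric_matrix_diagonalizable:
  fixes A :: "real mat"
  assumes A: "A \<in> carrier_mat n n" and sym: "\<And>i j. i < n \<Longrightarrow> j < n \<Longrightarrow> A $$ (i,j) = A $$ (j,i)"
  obtains P Q :: "complex mat" and cs :: "complex list"
  where "P \<in> carrier_mat n n" "Q \<in> carrier_mat n n" "P * Q = 1\<^sub>m n" "Q * P = 1\<^sub>m n"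
    and "length cs = n"
    and "map_mat of_real A * P = P * mat n n (\<lambda>(i,j). if i = j then cs ! i else 0)"
    and "\<And>x. order x (char_poly (map_mat of_real A)) = length (filter ((=) x) cs)"
proof -
  define Ac where "Ac = map_mat complex_of_real A"
  have Ac: "Ac \<in> carrier_mat n n" unfolding Ac_def using A by simp
  obtain es where "char_poly Ac = (\<Prod>e\<leftarrow>es. [:- e, 1:])" using char_poly_factorized[OF Ac] by blast
  then obtain n_as where jnf: "jordan_nf Ac n_as" using jordan_nf_exists[OF Ac] by blast
  define cs where "cs = map snd n_as"
  have "\<forall>na\<in>set n_as. fst na = 1"
    using jordan_nf_symmetric_block_size[OF A sym jnf[unfolded Ac_def]] by force
  hence n_as: "n_as = map (\<lambda>c. (1::nat, c)) cs"
    unfolding cs_def by (induction n_as) auto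
  define D where "D = jordan_matrix n_as"
  have D: "D = mat (length cs) (length cs) (\<lambda>(i,j). if i = j then cs ! i else 0)"
    unfolding D_def n_as jordan_matrix_trivial_blocks by simp
  have "similar_mat Ac D" using jnf unfolding jordan_nf_def D_def by simp
  then obtain P Q where "similar_mat_wit Ac D P Q" unfolding similar_mat_def by blast
  note PQ = similar_mat_witD2[OF Ac this]
  have len: "length cs = n" using PQ(5) D by auto
  have "Ac * P = P * D * (Q * P)" using PQ by (simp add: assoc_mult_mat[of _ n n _ n _ n])
  also have "\<dots> = P * D" using PQ by simp
  finally have "Ac * P = P * D" .
  moreover have "order x (char_poly Ac) = length (filter ((=) x) cs)" for x
  proof -
    have "order x (char_poly Ac) = sum_list (map fst (filter (\<lambda>na. snd na = x) n_as))"
      by (rule jordan_nf_order[OF jnf])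
    also have "\<dots> = length (filter ((=) x) cs)"
      unfolding n_as by (induction cs) auto
    finally show ?thesis .
  qed
  ultimately show thesis
    using that[OF PQ(6,7,1,2) len] unfolding Ac_def D len by blast
qed

text \<open>An eigenbasis of a real symmetric matrix a: the vectors p i (the columns of an
  invertible matrix P, with q i the rows of its inverse) satisfy a p i = ev i p i.\<close>

locale sym_eigenbasis =
  fixes n :: nat and a :: "nat \<Rightarrow> nat \<Rightarrow> real"
    and p q :: "nat \<Rightarrow> nat \<Rightarrow> complex" and ev :: "nat \<Rightarrow> real"
  assumes sym: "\<And>u w. u < n \<Longrightarrow> w < n \<Longrightarrow> a u w = a w u"
    and left_inverse: "\<And>i j. i < n \<Longrightarrow> j < n \<Longrightarrow> (\<Sum>u<n. q i u * p j u) = (if i = j then 1 else 0)"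
    and right_inverse: "\<And>u w. u < n \<Longrightarrow> w < n \<Longrightarrow> (\<Sum>i<n. p i u * q i w) = (if u = w then 1 else 0)"
    and eigen: "\<And>i u. i < n \<Longrightarrow> u < n \<Longrightarrow>
      (\<Sum>w<n. of_real (a u w) * p i w) = of_real (ev i) * p i u"

lemma index_mult_mat_sum:
  "M \<in> carrier_mat n n \<Longrightarrow> N \<in> carrier_mat n n \<Longrightarrow> i < n \<Longrightarrow> j < n \<Longrightarrow>
    (M * N) $$ (i,j) = (\<Sum>k<n. M $$ (i,k) * N $$ (k,j))"
  by (simp add: scalar_prod_def lessThan_atLeast0)

lemma order_char_poly_of_real:
  fixes A :: "real mat"
  assumes "A \<in> carrier_mat n n"
  shows "order (of_real x :: complex) (char_poly (map_mat of_real A)) = order x (char_poly A)"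
proof -
  interpret of_real_poly: map_poly_inj_idom_divide_hom "of_real :: real \<Rightarrow> complex" ..
  show ?thesis by (simp only: of_real_hom.char_poly_hom[OF assms] of_real_poly.order_hom)
qed

lemma symmetric_matrix_eigenbasis:
  fixes A :: "real mat"
  assumes A: "A \<in> carrier_mat n n" and sym: "\<And>i j. i < n \<Longrightarrow> j < n \<Longrightarrow> A $$ (i,j) = A $$ (j,i)"
  obtains p q ev where "sym_eigenbasis n (\<lambda>u w. A $$ (u,w)) p q ev"
    and "\<And>x. order x (char_poly A) = card {i. i < n \<and> ev i = x}"
proof -
  obtain P Q :: "complex mat" and cs :: "complex list"
    where PQ: "P \<in> carrier_mat n n" "Q \<in> carrier_mat n n" "P * Q = 1\<^sub>m n" "Q * P = 1\<^sub>m n"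
    and len: "length cs = n"
    and AP: "map_mat of_real A * P = P * mat n n (\<lambda>(i,j). if i = j then cs ! i else 0)"
    and order_cs: "\<And>x. order x (char_poly (map_mat of_real A)) = length (filter ((=) x) cs)"
    using symmetric_matrix_diagonalizable[OF A sym] by blast
  have left: "(\<Sum>u<n. Q $$ (i,u) * P $$ (u,j)) = (if i = j then 1 else 0)" if "i < n" "j < n" for i j
    using index_mult_mat_sum[OF PQ(2,1) that] PQ(4) that by simp
  have right: "(\<Sum>i<n. P $$ (u,i) * Q $$ (i,w)) = (if u = w then 1 else 0)" if "u < n" "w < n" for u w
    using index_mult_mat_sum[OF PQ(1,2) that] PQ(3) that by simp
  have eigen: "(\<Sum>w<n. of_real (A $$ (u,w)) * P $$ (w,i)) = cs ! i * P $$ (u,i)"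
    if "i < n" "u < n" for i u
  proof -
    have "(\<Sum>w<n. of_real (A $$ (u,w)) * P $$ (w,i)) = (map_mat of_real A * P) $$ (u,i)"
      using index_mult_mat_sum[of "map_mat of_real A" n P u i] that PQ(1) A by simp
    also have "\<dots> = (\<Sum>k<n. P $$ (u,k) * (if k = i then cs ! k else 0))"
      unfolding AP using that PQ(1) by (simp add: scalar_prod_def lessThan_atLeast0)
    also have "\<dots> = cs ! i * P $$ (u,i)"
      using that by (simp add: if_distrib[of "\<lambda>x. _ * x"] sum.delta' cong: if_cong)
    finally show ?thesis .
  qed
  have cs_real: "Im (cs ! i) = 0" if i: "i < n" for i
  proof (rule symmetric_eigenvalue_real[of n "\<lambda>u w. A $$ (u,w)" "\<lambda>u. P $$ (u,i)"])
    show "\<exists>u<n. P $$ (u, i) \<noteq> 0"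
    proof (rule ccontr)
      assume "\<not> (\<exists>u<n. P $$ (u, i) \<noteq> 0)"
      hence "(\<Sum>u<n. Q $$ (i,u) * P $$ (u,i)) = 0" by simp
      with left[OF i i] show False by simp
    qed
  qed (use sym eigen i in auto)
  define ev where "ev i = Re (cs ! i)" for i
  have cs_ev: "cs ! i = of_real (ev i)" if "i < n" for i
    using cs_real[OF that] by (simp add: ev_def complex_eq_iff)
  have "sym_eigenbasis n (\<lambda>u w. A $$ (u,w)) (\<lambda>i u. P $$ (u,i)) (\<lambda>i u. Q $$ (i,u)) ev"
    by unfold_locales (simp_all add: sym left right eigen cs_ev)
  moreover have "order x (char_poly A) = card {i. i < n \<and> ev i = x}" for x
  proof -
    have "order x (char_poly A) = card {i. i < length cs \<and> of_real x = cs ! i}"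
      by (simp only: order_char_poly_of_real[OF A, symmetric] order_cs length_filter_conv_card)
    also have "{i. i < length cs \<and> of_real x = cs ! i} = {i. i < n \<and> ev i = x}"
      using cs_ev len by auto
    finally show ?thesis .
  qed
  ultimately show thesis by (rule that)
qed


lemma inner_lincomb_lincomb:
  fixes p :: "nat \<Rightarrow> nat \<Rightarrow> complex"
  shows "(\<Sum>u<n. cnj (\<Sum>j<n. \<alpha> j * p j u) * (\<Sum>i<n. \<beta> i * p i u)) =
    (\<Sum>i<n. \<Sum>j<n. cnj (\<alpha> j) * \<beta> i * (\<Sum>u<n. cnj (p j u) * p i u))"
proof -
  have "(\<Sum>u<n. cnj (\<Sum>j<n. \<alpha> j * p j u) * (\<Sum>i<n. \<beta> i * p i u)) =
        (\<Sum>u<n. \<Sum>j<n. \<Sum>i<n. cnj (\<alpha> j) * \<beta> i * (cnj (p j u) * p i u))"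
    by (simp add: cnj_sum sum_distrib_left sum_distrib_right mult.commute mult.left_commute)
  also have "\<dots> = (\<Sum>u<n. \<Sum>i<n. \<Sum>j<n. cnj (\<alpha> j) * \<beta> i * (cnj (p j u) * p i u))"
    by (intro sum.cong refl sum.swap)
  also have "\<dots> = (\<Sum>i<n. \<Sum>u<n. \<Sum>j<n. cnj (\<alpha> j) * \<beta> i * (cnj (p j u) * p i u))"
    by (rule sum.swap)
  also have "\<dots> = (\<Sum>i<n. \<Sum>j<n. \<Sum>u<n. cnj (\<alpha> j) * \<beta> i * (cnj (p j u) * p i u))"
    by (intro sum.cong refl sum.swap)
  also have "\<dots> = (\<Sum>i<n. \<Sum>j<n. cnj (\<alpha> j) * \<beta> i * (\<Sum>u<n. cnj (p j u) * p i u))"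
    by (simp add: sum_distrib_left)
  finally show ?thesis .
qed

context sym_eigenbasis
begin

definition coord :: "(nat \<Rightarrow> complex) \<Rightarrow> nat \<Rightarrow> complex" where
  "coord x i = (\<Sum>u<n. q i u * x u)"

lemma eigen_expansion: "u < n \<Longrightarrow> x u = (\<Sum>i<n. coord x i * p i u)"
proof -
  assume u: "u < n"
  have "(\<Sum>i<n. coord x i * p i u) = (\<Sum>i<n. \<Sum>w<n. x w * (p i u * q i w))"
    unfolding coord_def by (simp add: sum_distrib_left sum_distrib_right mult.commute mult.left_commute)
  also have "\<dots> = (\<Sum>w<n. \<Sum>i<n. x w * (p i u * q i w))" by (rule sum.swap)
  also have "\<dots> = (\<Sum>w<n. x w * (if u = w then 1 else 0))"
    using u by (simp add: sum_distrib_left[symmetric] right_inverse)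
  also have "\<dots> = x u" using u by (simp add: if_distrib[of "\<lambda>t. _ * t"] sum.delta cong: if_cong)
  finally show ?thesis by simp
qed

lemma coord_lincomb:
  assumes "I \<subseteq> {..<n}" and "k < n"
  shows "coord (\<lambda>u. \<Sum>i\<in>I. c i * p i u) k = (if k \<in> I then c k else 0)"
proof -
  have "coord (\<lambda>u. \<Sum>i\<in>I. c i * p i u) k = (\<Sum>i\<in>I. \<Sum>u<n. c i * (q k u * p i u))"
    unfolding coord_def by (subst sum.swap) (simp add: sum_distrib_left mult.commute mult.left_commute)
  also have "\<dots> = (\<Sum>i\<in>I. c i * (if k = i then 1 else 0))"
    using assms by (intro sum.cong refl) (auto simp: sum_distrib_left[symmetric] left_inverse)
  also have "\<dots> = (if k \<in> I then c k else 0)"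
    using finite_subset[OF assms(1)] by (simp add: if_distrib[of "\<lambda>t. _ * t"] sum.delta cong: if_cong)
  finally show ?thesis .
qed

lemma mult_eigen_expansion:
  "u < n \<Longrightarrow> (\<Sum>w<n. of_real (a u w) * x w) = (\<Sum>i<n. coord x i * of_real (ev i) * p i u)"
proof -
  assume u: "u < n"
  have "(\<Sum>w<n. of_real (a u w) * x w) = (\<Sum>w<n. \<Sum>i<n. coord x i * (of_real (a u w) * p i w))"
    using eigen_expansion[of _ x] by (simp add: sum_distrib_left mult.commute mult.left_commute)
  also have "\<dots> = (\<Sum>i<n. \<Sum>w<n. coord x i * (of_real (a u w) * p i w))" by (rule sum.swap)
  also have "\<dots> = (\<Sum>i<n. coord x i * (of_real (ev i) * p i u))"
    using u by (simp add: sum_distrib_left[symmetric] eigen)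
  finally show ?thesis by (simp add: mult.assoc)
qed

lemma eigenvectors_orthogonal:
  assumes ij: "i < n" "j < n" "ev i \<noteq> ev j"
  shows "(\<Sum>u<n. cnj (p j u) * p i u) = 0"
proof -
  let ?G = "(\<Sum>u<n. cnj (p j u) * p i u)"
  have "of_real (ev i) * ?G = (\<Sum>u<n. cnj (p j u) * (of_real (ev i) * p i u))"
    by (simp add: sum_distrib_left mult.commute mult.left_commute)
  also have "\<dots> = (\<Sum>u<n. cnj (p j u) * (\<Sum>w<n. of_real (a u w) * p i w))"
    using ij by (simp add: eigen)
  also have "\<dots> = (\<Sum>w<n. \<Sum>u<n. p i w * (of_real (a u w) * cnj (p j u)))"
    by (subst sum.swap) (simp add: sum_distrib_left mult.commute mult.left_commute)
  also have "\<dots> = (\<Sum>w<n. p i w * cnj (\<Sum>u<n. of_real (a w u) * p j u))"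
    by (auto simp: sum_distrib_left cnj_sum sym intro!: sum.cong)
  also have "\<dots> = (\<Sum>w<n. p i w * cnj (of_real (ev j) * p j w))"
    using ij by (simp add: eigen)
  also have "\<dots> = of_real (ev j) * ?G"
    by (simp add: sum_distrib_left mult.commute mult.left_commute)
  finally have "(of_real (ev i) - of_real (ev j)) * ?G = 0" by (simp add: algebra_simps)
  thus ?thesis using ij(3) by simp
qed

text \<open>With the negative spectrum removed, the quadratic form of a is a sum of squares: it is
  the squared norm of the image under the square root of the positive part of a.\<close>

definition sqrt_pos_part :: "(nat \<Rightarrow> complex) \<Rightarrow> nat \<Rightarrow> complex" where
  "sqrt_pos_part x u = (\<Sum>i<n. (if ev i > 0 then coord x i * of_real (sqrt (ev i)) else 0) * p i u)"

lemma qform_eq_norm2_sqrt_pos_part: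
  assumes nonneg: "\<And>i. i < n \<Longrightarrow> ev i < 0 \<Longrightarrow> coord x i = 0"
  shows "qform n a x = norm2 n (sqrt_pos_part x)"
proof -
  define r where "r i = (if ev i > 0 then coord x i * of_real (sqrt (ev i)) else 0)" for i
  define G where "G j i = (\<Sum>u<n. cnj (p j u) * p i u)" for j i
  have "qform n a x = (\<Sum>u<n. cnj (x u) * (\<Sum>w<n. of_real (a u w) * x w))"
    unfolding qform_def by (simp add: sum_distrib_left mult.commute mult.left_commute)
  also have "\<dots> = (\<Sum>u<n. cnj (\<Sum>j<n. coord x j * p j u) * (\<Sum>i<n. (coord x i * of_real (ev i)) * p i u))"
    by (intro sum.cong refl) (simp only: lessThan_iff mult_eigen_expansion flip: eigen_expansion)
  also have "\<dots> = (\<Sum>i<n. \<Sum>j<n. cnj (coord x j) * (coord x i * of_real (ev i)) * G j i)"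
    unfolding G_def by (rule inner_lincomb_lincomb)
  also have "\<dots> = (\<Sum>i<n. \<Sum>j<n. cnj (r j) * r i * G j i)"
  proof (intro sum.cong refl)
    fix i j assume "i \<in> {..<n}" "j \<in> {..<n}"
    hence i: "i < n" and j: "j < n" by auto
    show "cnj (coord x j) * (coord x i * of_real (ev i)) * G j i = cnj (r j) * r i * G j i"
    proof (cases "G j i = 0")
      case False
      hence ev_ji: "ev j = ev i"
        using eigenvectors_orthogonal[OF i j] unfolding G_def by (cases "ev i = ev j") auto
      consider "ev i > 0" | "ev i = 0" | "ev i < 0" by linarith
      thus ?thesis
      proof cases
        case 1
        hence "of_real (ev i) = (of_real (sqrt (ev i)) * of_real (sqrt (ev j)) :: complex)"
          using ev_ji by (simp flip: of_real_mult)
        thus ?thesis unfolding r_def using 1 ev_ji by simp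
      next
        case 3
        thus ?thesis unfolding r_def using nonneg[OF i] by simp
      qed (simp add: r_def)
    qed simp
  qed
  also have "\<dots> = norm2 n (sqrt_pos_part x)"
    unfolding norm2_def sqrt_pos_part_def G_def r_def[symmetric] by (rule inner_lincomb_lincomb[symmetric])
  finally show ?thesis .
qed

lemma qform_nonneg:
  assumes "\<And>i. i < n \<Longrightarrow> ev i < 0 \<Longrightarrow> coord x i = 0"
  shows "\<exists>s\<ge>0. qform n a x = of_real s"
proof -
  have "qform n a x = of_real (\<Sum>u<n. (cmod (sqrt_pos_part x u))\<^sup>2)"
    using qform_eq_norm2_sqrt_pos_part[OF assms] norm2_eq_of_real by simp
  moreover have "(\<Sum>u<n. (cmod (sqrt_pos_part x u))\<^sup>2) \<ge> 0" by (simp add: sum_nonneg)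
  ultimately show ?thesis by blast
qed

lemma kernel_if_qform_eq_0:
  assumes nonneg: "\<And>i. i < n \<Longrightarrow> ev i < 0 \<Longrightarrow> coord x i = 0"
    and zero: "qform n a x = 0" and u: "u < n"
  shows "(\<Sum>w<n. of_real (a u w) * x w) = 0"
proof -
  have "coord x i * of_real (ev i) = 0" if i: "i < n" for i
  proof (cases "ev i > 0")
    case True
    have "coord (sqrt_pos_part x) i = coord x i * of_real (sqrt (ev i))"
      unfolding sqrt_pos_part_def using coord_lincomb[of "{..<n}" i] i True by simp
    moreover have "norm2 n (sqrt_pos_part x) = 0"
      using zero qform_eq_norm2_sqrt_pos_part[OF nonneg] by simp
    hence "sqrt_pos_part x w = 0" if "w < n" for w
      using that norm2_eq_0_iff by blast
    ultimately have "coord x i * of_real (sqrt (ev i)) = 0" unfolding coord_def by simp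
    thus ?thesis using True by simp
  next
    case False
    thus ?thesis using nonneg[OF i] by (cases "ev i = 0") auto
  qed
  hence "(\<Sum>i<n. coord x i * of_real (ev i) * p i u) = 0" by (intro sum.neutral) simp
  thus ?thesis using mult_eigen_expansion[OF u, of x] by simp
qed

end


definition indep_columns :: "nat \<Rightarrow> (nat \<Rightarrow> nat \<Rightarrow> real) \<Rightarrow> nat set \<Rightarrow> bool" where
  "indep_columns n a S \<longleftrightarrow>
    (\<forall>y. (\<forall>u<n. (\<Sum>s\<in>S. of_real (a u s) * y s) = 0) \<longrightarrow> (\<forall>s\<in>S. y s = (0::complex)))"

lemma column_in_span_if_not_indep_columns_insert:
  fixes a :: "nat \<Rightarrow> nat \<Rightarrow> real"
  assumes "finite S" "u \<notin> S" and indep: "indep_columns n a S"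
    and dep: "\<not> indep_columns n a (insert u S)"
  shows "\<exists>co :: nat \<Rightarrow> complex. \<forall>v<n. of_real (a v u) = (\<Sum>s\<in>S. co s * of_real (a v s))"
proof -
  obtain y :: "nat \<Rightarrow> complex" where y: "\<And>v. v < n \<Longrightarrow> (\<Sum>s\<in>insert u S. of_real (a v s) * y s) = 0"
    and y_nonzero: "\<not> (\<forall>s\<in>insert u S. y s = 0)"
    using dep unfolding indep_columns_def by blast
  have y_split: "of_real (a v u) * y u + (\<Sum>s\<in>S. of_real (a v s) * y s) = 0" if "v < n" for v
    using y[OF that] assms(1,2) by simp
  have "y u \<noteq> 0"
  proof
    assume "y u = 0"
    hence "\<forall>v<n. (\<Sum>s\<in>S. of_real (a v s) * y s) = 0" using y_split by simp
    hence "\<forall>s\<in>S. y s = 0" using indep unfolding indep_columns_def by blast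
    with y_nonzero \<open>y u = 0\<close> show False by auto
  qed
  have "of_real (a v u) = (\<Sum>s\<in>S. - y s / y u * of_real (a v s))" if v: "v < n" for v
  proof -
    have "of_real (a v u) * y u = - (\<Sum>s\<in>S. of_real (a v s) * y s)"
      using y_split[OF v] by (simp add: eq_neg_iff_add_eq_0)
    hence "of_real (a v u) = - (\<Sum>s\<in>S. of_real (a v s) * y s) / y u"
      using \<open>y u \<noteq> 0\<close> by (metis nonzero_mult_div_cancel_right)
    also have "\<dots> = (\<Sum>s\<in>S. - y s / y u * of_real (a v s))"
      by (simp add: sum_divide_distrib sum_negf mult.commute)
    finally show ?thesis .
  qed
  thus ?thesis by (intro exI[of _ "\<lambda>s. - y s / y u"]) simp
qed

lemma exists_spanning_indep_columns:
  fixes a :: "nat \<Rightarrow> nat \<Rightarrow> real"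
  obtains S and co :: "nat \<Rightarrow> nat \<Rightarrow> complex"
  where "S \<subseteq> {..<n}" "indep_columns n a S"
    and "\<And>u v. u < n \<Longrightarrow> v < n \<Longrightarrow> of_real (a v u) = (\<Sum>s\<in>S. co u s * of_real (a v s))"
proof -
  let ?F = "\<lambda>T. T \<subseteq> {..<n} \<and> indep_columns n a T"
  have F_empty: "?F {}" by (simp add: indep_columns_def)
  have F_bound: "\<forall>T. ?F T \<longrightarrow> card T < Suc n"
  proof (intro allI impI)
    fix T assume "?F T"
    hence "card T \<le> card {..<n}" by (intro card_mono) auto
    thus "card T < Suc n" by simp
  qed
  obtain S where S: "?F S" and S_max: "\<And>T. ?F T \<Longrightarrow> card T \<le> card S"
    using ex_has_greatest_nat[of ?F "{}" card "Suc n", OF F_empty F_bound] by blast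
  have "finite S" using S finite_subset by blast
  have "\<exists>co :: nat \<Rightarrow> complex. \<forall>v<n. of_real (a v u) = (\<Sum>s\<in>S. co s * of_real (a v s))" if u: "u < n" for u
  proof (cases "u \<in> S")
    case True
    show ?thesis
      by (rule exI[of _ "\<lambda>s. if s = u then 1 else 0"])
        (use True \<open>finite S\<close> in \<open>simp add: if_distrib[of "\<lambda>t. t * _"] sum.delta cong: if_cong\<close>)
  next
    case False
    have "\<not> ?F (insert u S)"
    proof
      assume "?F (insert u S)"
      from S_max[OF this] False \<open>finite S\<close> show False by simp
    qed
    hence "\<not> indep_columns n a (insert u S)" using S u by simp
    thus ?thesis by (rule column_in_span_if_not_indep_columns_insert[OF \<open>finite S\<close> False conjunct2[OF S]])
  qed
  hence "\<forall>u\<in>{..<n}. \<exists>co :: nat \<Rightarrow> complex. \<forall>v<n. of_real (a v u) = (\<Sum>s\<in>S. co s * of_real (a v s))" by blast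
  from bchoice[OF this] obtain co :: "nat \<Rightarrow> nat \<Rightarrow> complex"
    where co: "\<forall>u\<in>{..<n}. \<forall>v<n. of_real (a v u) = (\<Sum>s\<in>S. co u s * of_real (a v s))"
    by (elim exE)
  show thesis by (rule that[of S co]) (use S co in auto)
qed

context sym_eigenbasis
begin

lemma sym_eigenbasis_uminus: "sym_eigenbasis n (\<lambda>u w. - a u w) p q (\<lambda>i. - ev i)"
  by unfold_locales (simp_all add: sym left_inverse right_inverse sum_negf eigen)

text \<open>The rank of a is at least the number of its nonzero eigenvalues: every eigenvector for a
  nonzero eigenvalue lies in the span of the columns of a.\<close>

lemma eigenvector_in_column_span:
  fixes co :: "nat \<Rightarrow> nat \<Rightarrow> complex"
  assumes span: "\<And>u v. u < n \<Longrightarrow> v < n \<Longrightarrow> of_real (a v u) = (\<Sum>s\<in>S. co u s * of_real (a v s))"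
    and i: "i < n" "ev i \<noteq> 0" and v: "v < n"
  shows "p i v = (\<Sum>s\<in>S. of_real (a v s) * ((\<Sum>u<n. p i u * co u s) / of_real (ev i)))"
proof -
  have ev_i: "(of_real (ev i) :: complex) \<noteq> 0" using i by simp
  have "of_real (ev i) * p i v = (\<Sum>u<n. of_real (a v u) * p i u)"
    using eigen i v by simp
  also have "\<dots> = (\<Sum>u<n. \<Sum>s\<in>S. p i u * co u s * of_real (a v s))"
    using span v by (simp add: sum_distrib_left sum_distrib_right mult.commute mult.left_commute)
  also have "\<dots> = (\<Sum>s\<in>S. of_real (a v s) * (\<Sum>u<n. p i u * co u s))"
    by (subst sum.swap) (simp add: sum_distrib_left mult.commute mult.left_commute)
  also have "\<dots> = (\<Sum>s\<in>S. of_real (ev i) * (of_real (a v s) * ((\<Sum>u<n. p i u * co u s) / of_real (ev i))))"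
    using ev_i by (intro sum.cong refl) simp
  also have "\<dots> = of_real (ev i) * (\<Sum>s\<in>S. of_real (a v s) * ((\<Sum>u<n. p i u * co u s) / of_real (ev i)))"
    by (simp add: sum_distrib_left)
  finally show ?thesis using ev_i by simp
qed

lemma card_nonzero_ev_le_card_spanning:
  fixes co :: "nat \<Rightarrow> nat \<Rightarrow> complex"
  assumes S: "S \<subseteq> {..<n}"
    and span: "\<And>u v. u < n \<Longrightarrow> v < n \<Longrightarrow> of_real (a v u) = (\<Sum>s\<in>S. co u s * of_real (a v s))"
  shows "card {i. i < n \<and> ev i \<noteq> 0} \<le> card S"
proof (rule card_le_of_injective_linear_map[of S _ "\<lambda>s i. (\<Sum>u<n. p i u * co u s) / of_real (ev i)"])
  let ?Z = "{i. i < n \<and> ev i \<noteq> 0}"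
  show "finite S" using S finite_subset by blast
  show "finite ?Z" by simp
  fix c assume c: "\<forall>s\<in>S. (\<Sum>i\<in>?Z. (\<Sum>u<n. p i u * co u s) / of_real (ev i) * c i) = 0"
  have comb: "(\<Sum>i\<in>?Z. c i * p i v) = 0" if v: "v < n" for v
  proof -
    have "(\<Sum>i\<in>?Z. c i * p i v) =
        (\<Sum>i\<in>?Z. \<Sum>s\<in>S. of_real (a v s) * ((\<Sum>u<n. p i u * co u s) / of_real (ev i) * c i))"
      using eigenvector_in_column_span[OF span _ _ v]
      by (simp add: sum_distrib_left sum_distrib_right mult.commute mult.left_commute)
    also have "\<dots> = (\<Sum>s\<in>S. of_real (a v s) * (\<Sum>i\<in>?Z. (\<Sum>u<n. p i u * co u s) / of_real (ev i) * c i))"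
      by (subst sum.swap) (simp add: sum_distrib_left)
    also have "\<dots> = 0" using c by simp
    finally show ?thesis .
  qed
  show "\<forall>i\<in>?Z. c i = 0"
  proof
    fix k assume k: "k \<in> ?Z"
    have "?Z \<subseteq> {..<n}" by auto
    hence "c k = coord (\<lambda>v. \<Sum>i\<in>?Z. c i * p i v) k"
      using coord_lincomb[of ?Z k c] k by simp
    also have "\<dots> = 0" unfolding coord_def using comb by simp
    finally show "c k = 0" .
  qed
qed

lemma isotropic_family_vanishes:
  fixes x :: "nat \<Rightarrow> nat \<Rightarrow> complex"
  assumes S: "S \<subseteq> {..<n}" "indep_columns n a S"
    and supp: "\<And>u l. u < n \<Longrightarrow> u \<notin> S \<Longrightarrow> l < d \<Longrightarrow> x u l = 0"
    and nonneg: "\<And>i l. i < n \<Longrightarrow> ev i < 0 \<Longrightarrow> l < d \<Longrightarrow> coord (\<lambda>u. x u l) i = 0"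
    and isotropic: "(\<Sum>u<n. \<Sum>w<n. of_real (a u w) * (\<Sum>l<d. cnj (x u l) * x w l)) = 0"
    and "u < n" "l < d"
  shows "x u l = 0"
proof -
  define F where "F l = qform n a (\<lambda>u. x u l)" for l
  have F_real: "F l = of_real (Re (F l))" and Re_F_nonneg: "Re (F l) \<ge> 0" if l: "l < d" for l
  proof -
    obtain s where "s \<ge> 0" "F l = of_real s"
      using qform_nonneg[of "\<lambda>u. x u l", OF nonneg[OF _ _ l]] unfolding F_def by blast
    thus "F l = of_real (Re (F l))" "Re (F l) \<ge> 0" by simp_all
  qed
  have "(\<Sum>l<d. F l) = (\<Sum>u<n. \<Sum>l<d. \<Sum>w<n. of_real (a u w) * (cnj (x u l) * x w l))"
    unfolding F_def qform_def by (rule sum.swap)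
  also have "\<dots> = (\<Sum>u<n. \<Sum>w<n. \<Sum>l<d. of_real (a u w) * (cnj (x u l) * x w l))"
    by (intro sum.cong refl sum.swap)
  also have "\<dots> = 0" using isotropic by (simp add: sum_distrib_left)
  finally have "(\<Sum>l<d. Re (F l)) = 0" by (simp flip: Re_sum)
  hence "Re (F l) = 0"
    using Re_F_nonneg \<open>l < d\<close> by (subst (asm) sum_nonneg_eq_0_iff) auto
  hence "qform n a (\<lambda>u. x u l) = 0" using F_real[OF \<open>l < d\<close>] unfolding F_def by simp
  hence "(\<Sum>w<n. of_real (a v w) * x w l) = 0" if "v < n" for v
    using kernel_if_qform_eq_0[of "\<lambda>u. x u l", OF nonneg[OF _ _ \<open>l < d\<close>] _ that] by simp
  moreover have "(\<Sum>s\<in>S. of_real (a v s) * x s l) = (\<Sum>w<n. of_real (a v w) * x w l)" for v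
    by (rule sum.mono_neutral_left) (use S supp \<open>l < d\<close> in auto)
  ultimately have "\<forall>v<n. (\<Sum>s\<in>S. of_real (a v s) * x s l) = 0" by simp
  moreover have "(\<forall>v<n. (\<Sum>s\<in>S. of_real (a v s) * x s l) = 0) \<longrightarrow> (\<forall>s\<in>S. x s l = 0)"
    using S(2) unfolding indep_columns_def by (rule spec)
  ultimately show ?thesis using supp \<open>u < n\<close> \<open>l < d\<close> by blast
qed

end


lemma (in vec_space) lin_indpt_enum_coeffs_zero:
  assumes S: "finite S" "S \<subseteq> carrier_vec n" "lin_indpt S" and h: "bij_betw h {..<r} S"
    and zero: "\<forall>l<n. (\<Sum>k<r. c k * h k $ l) = 0" and k: "k < r"
  shows "c k = 0"
proof (rule ccontr)
  assume "c k \<noteq> 0"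
  define a where "a x = c (inv_into {..<r} h x)" for x
  have "lincomb a S = 0\<^sub>v n"
  proof (rule eq_vecI)
    have "lincomb a S \<in> carrier_vec n" using S by (intro lincomb_closed) auto
    thus "dim_vec (lincomb a S) = dim_vec (0\<^sub>v n)" by simp
    fix l assume "l < dim_vec (0\<^sub>v n)"
    hence l: "l < n" by simp
    have "lincomb a S $ l = (\<Sum>x\<in>S. a x * x $ l)" by (rule lincomb_index[OF l S(2)])
    also have "\<dots> = (\<Sum>j<r. a (h j) * h j $ l)"
      by (rule sum.reindex_bij_betw[OF h, symmetric])
    also have "\<dots> = (\<Sum>j<r. c j * h j $ l)"
      unfolding a_def using h by (intro sum.cong refl) (simp add: bij_betw_inv_into_left)
    also have "\<dots> = 0" using zero l by simp
    finally show "lincomb a S $ l = 0\<^sub>v n $ l" using l by simp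
  qed
  moreover have "h k \<in> S" using h k by (auto simp: bij_betw_def)
  moreover have "a (h k) \<noteq> 0" unfolding a_def using h k \<open>c k \<noteq> 0\<close> by (simp add: bij_betw_inv_into_left)
  ultimately have "lin_dep S"
    unfolding lin_dep_def using S(1) by (intro exI[of _ S] exI[of _ a] exI[of _ "h k"]) auto
  with S(3) show False by simp
qed

lemma projector_range_basis:
  fixes P :: "complex mat"
  assumes P: "P \<in> carrier_mat d d" and idem: "P * P = P" and rank: "vec_space.rank d P = r"
  shows "\<exists>b. (\<forall>k<r. b k \<in> carrier_vec d \<and> P *\<^sub>v b k = b k) \<and>
    (\<forall>c. (\<forall>l<d. (\<Sum>k<r. c k * b k $ l) = 0) \<longrightarrow> (\<forall>k<r. c k = 0))"
proof -
  interpret vec_space "TYPE(complex)" d .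
  have "lin_indpt {}" unfolding lin_dep_def by auto
  then obtain S where S: "finite S" "maximal S (\<lambda>T. T \<subseteq> set (cols P) \<and> lin_indpt T)"
    using maximal_exists_superset[of "set (cols P)" "\<lambda>T. T \<subseteq> set (cols P) \<and> lin_indpt T" "{}"] by auto
  have S_cols: "S \<subseteq> set (cols P)" and S_indpt: "lin_indpt S" using S(2) unfolding maximal_def by auto
  have S_carrier: "S \<subseteq> carrier_vec d" using S_cols P by (auto simp: cols_def)
  have "card S = r" using rank_card_indpt[OF P S(2)] rank by simp
  then obtain h where h: "bij_betw h {..<r} S"
    using ex_bij_betw_nat_finite[OF S(1)] by (auto simp: atLeast0LessThan)
  have fixed: "P *\<^sub>v x = x" if "x \<in> S" for x
  proof -
    from that S_cols obtain j where j: "j < d" "x = col P j" using P by (auto simp: cols_def)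
    have "P *\<^sub>v col P j = col (P * P) j" using col_mult2[OF P P j(1)] by simp
    thus ?thesis using idem j by simp
  qed
  show ?thesis
  proof (intro exI[of _ h] conjI allI impI)
    fix k assume "k < r"
    hence "h k \<in> S" using h by (auto simp: bij_betw_def)
    thus "h k \<in> carrier_vec d" "P *\<^sub>v h k = h k" using S_carrier fixed by auto
  next
    fix c k assume "\<forall>l<d. (\<Sum>k<r. c k * h k $ l) = 0" "k < r"
    thus "c k = 0" by (rule lin_indpt_enum_coeffs_zero[OF S(1) S_carrier S_indpt h])
  qed
qed

lemma representation_bases:
  assumes "dr_representation n E d r P"
  obtains b :: "nat \<Rightarrow> nat \<Rightarrow> complex vec"
  where "\<And>v k l. v < n \<Longrightarrow> k < r \<Longrightarrow> l < d \<Longrightarrow> (\<Sum>t<d. P v $$ (l,t) * b v k $ t) = b v k $ l"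
    and "\<And>v c. v < n \<Longrightarrow> \<forall>l<d. (\<Sum>k<r. c k * b v k $ l) = 0 \<Longrightarrow> \<forall>k<r. c k = 0"
proof -
  have P: "P v \<in> carrier_mat d d" "P v * P v = P v" "vec_space.rank d (P v) = r" if "v < n" for v
    using assms that unfolding dr_representation_def orth_projector_def by auto
  have "\<forall>v\<in>{..<n}. \<exists>b. (\<forall>k<r. b k \<in> carrier_vec d \<and> P v *\<^sub>v b k = b k) \<and>
    (\<forall>c. (\<forall>l<d. (\<Sum>k<r. c k * b k $ l) = 0) \<longrightarrow> (\<forall>k<r. c k = 0))"
  proof
    fix v assume "v \<in> {..<n}"
    thus "\<exists>b. (\<forall>k<r. b k \<in> carrier_vec d \<and> P v *\<^sub>v b k = b k) \<and>
      (\<forall>c. (\<forall>l<d. (\<Sum>k<r. c k * b k $ l) = 0) \<longrightarrow> (\<forall>k<r. c k = 0))"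
      using projector_range_basis[OF P] by simp
  qed
  from bchoice[OF this] obtain b :: "nat \<Rightarrow> nat \<Rightarrow> complex vec"
    where b: "\<forall>v\<in>{..<n}. (\<forall>k<r. b v k \<in> carrier_vec d \<and> P v *\<^sub>v b v k = b v k) \<and>
      (\<forall>c. (\<forall>l<d. (\<Sum>k<r. c k * b v k $ l) = 0) \<longrightarrow> (\<forall>k<r. c k = 0))"
    by (elim exE)
  have b_carrier: "b v k \<in> carrier_vec d" and b_fixed: "P v *\<^sub>v b v k = b v k"
    if "v < n" "k < r" for v k
    using b that by auto
  show thesis
  proof (rule that)
    fix v k l assume v: "v < n" and k: "k < r" and l: "l < d"
    have "(P v *\<^sub>v b v k) $ l = (\<Sum>t<d. P v $$ (l,t) * b v k $ t)"
      using b_carrier[OF v k] l P(1)[OF v] by (simp add: scalar_prod_def lessThan_atLeast0)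
    thus "(\<Sum>t<d. P v $$ (l,t) * b v k $ t) = b v k $ l" using b_fixed[OF v k] by simp
  next
    fix v c assume "v < n" "\<forall>l<d. (\<Sum>k<r. c k * b v k $ l) = 0"
    thus "\<forall>k<r. c k = 0" using b by blast
  qed
qed

lemma projectors_orthogonal_inner_eq_0:
  fixes x y :: "nat \<Rightarrow> complex"
  assumes P: "orth_projector d P" and Q: "orth_projector d Q" and PQ: "P * Q = 0\<^sub>m d d"
    and x: "\<And>l. l < d \<Longrightarrow> (\<Sum>t<d. P $$ (l,t) * x t) = x l"
    and y: "\<And>l. l < d \<Longrightarrow> (\<Sum>t<d. Q $$ (l,t) * y t) = y l"
  shows "(\<Sum>l<d. cnj (x l) * y l) = 0"
proof -
  have P_carrier: "P \<in> carrier_mat d d" and "mat_adjoint P = P" and Q_carrier: "Q \<in> carrier_mat d d"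
    using P Q unfolding orth_projector_def by auto
  have herm: "cnj (P $$ (l,t)) = P $$ (t,l)" if "l < d" "t < d" for l t
  proof -
    have "mat_adjoint P $$ (t,l) = cnj (P $$ (l,t))"
      using that P_carrier by (simp add: mat_adjoint_def mat_of_rows_def)
    thus ?thesis using \<open>mat_adjoint P = P\<close> by simp
  qed
  have PQ_index: "(\<Sum>l<d. P $$ (t,l) * Q $$ (l,t')) = 0" if "t < d" "t' < d" for t t'
    using index_mult_mat_sum[OF P_carrier Q_carrier that] PQ that by simp
  have "(\<Sum>l<d. cnj (x l) * y l) =
      (\<Sum>l<d. cnj (\<Sum>t<d. P $$ (l,t) * x t) * (\<Sum>t'<d. Q $$ (l,t') * y t'))"
    using x y by simp
  also have "\<dots> = (\<Sum>l<d. \<Sum>t<d. \<Sum>t'<d. cnj (x t) * y t' * (P $$ (t,l) * Q $$ (l,t')))"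
    by (auto simp: cnj_sum sum_distrib_left sum_distrib_right herm mult.commute mult.left_commute
        intro!: sum.cong)
  also have "\<dots> = (\<Sum>t<d. \<Sum>t'<d. \<Sum>l<d. cnj (x t) * y t' * (P $$ (t,l) * Q $$ (l,t')))"
    by (subst sum.swap) (intro sum.cong refl sum.swap)
  also have "\<dots> = 0" by (simp add: sum_distrib_left[symmetric] PQ_index)
  finally show ?thesis .
qed


context sym_eigenbasis
begin

lemma projector_family_vanishes:
  fixes x :: "nat \<Rightarrow> nat \<Rightarrow> complex"
  assumes rep: "dr_representation n E d r P"
    and support: "\<And>u w. u < n \<Longrightarrow> w < n \<Longrightarrow> a u w \<noteq> 0 \<Longrightarrow> E u w"
    and S: "S \<subseteq> {..<n}" "indep_columns n a S"
    and fixed: "\<And>u l. u < n \<Longrightarrow> l < d \<Longrightarrow> (\<Sum>t<d. P u $$ (l,t) * x u t) = x u l"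
    and supp: "\<And>u l. u < n \<Longrightarrow> u \<notin> S \<Longrightarrow> l < d \<Longrightarrow> x u l = 0"
    and nonneg: "\<And>i l. i < n \<Longrightarrow> ev i < 0 \<Longrightarrow> l < d \<Longrightarrow> coord (\<lambda>u. x u l) i = 0"
    and "u < n" "l < d"
  shows "x u l = 0"
proof (rule isotropic_family_vanishes[OF S supp nonneg _ \<open>u < n\<close> \<open>l < d\<close>])
  have P_orth: "orth_projector d (P v)" if "v < n" for v
    using rep that unfolding dr_representation_def by auto
  have P_edge: "P v * P w = 0\<^sub>m d d" if "v < n" "w < n" "E v w" for v w
    using rep that unfolding dr_representation_def by auto
  show "(\<Sum>u<n. \<Sum>w<n. of_real (a u w) * (\<Sum>l<d. cnj (x u l) * x w l)) = 0"
  proof (intro sum.neutral ballI)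
    fix u w assume "u \<in> {..<n}" "w \<in> {..<n}"
    hence u: "u < n" and w: "w < n" by auto
    show "of_real (a u w) * (\<Sum>l<d. cnj (x u l) * x w l) = 0"
    proof (cases "a u w = 0")
      case False
      hence "(\<Sum>l<d. cnj (x u l) * x w l) = 0"
        using projectors_orthogonal_inner_eq_0[OF P_orth[OF u] P_orth[OF w]
            P_edge[OF u w support[OF u w]] fixed[OF u] fixed[OF w]] by blast
      thus ?thesis by simp
    qed simp
  qed
qed

lemma representation_coeffs_vanish:
  fixes b :: "nat \<Rightarrow> nat \<Rightarrow> complex vec" and c :: "nat \<times> nat \<Rightarrow> complex"
  assumes rep: "dr_representation n E d r P"
    and support: "\<And>u w. u < n \<Longrightarrow> w < n \<Longrightarrow> a u w \<noteq> 0 \<Longrightarrow> E u w"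
    and S: "S \<subseteq> {..<n}" "indep_columns n a S"
    and b_fixed: "\<And>v k l. v < n \<Longrightarrow> k < r \<Longrightarrow> l < d \<Longrightarrow> (\<Sum>t<d. P v $$ (l,t) * b v k $ t) = b v k $ l"
    and b_indep: "\<And>v c. v < n \<Longrightarrow> \<forall>l<d. (\<Sum>k<r. c k * b v k $ l) = 0 \<Longrightarrow> \<forall>k<r. c k = 0"
    and c: "\<And>i l. i < n \<Longrightarrow> ev i < 0 \<Longrightarrow> l < d \<Longrightarrow>
      (\<Sum>sk\<in>S \<times> {..<r}. q i (fst sk) * b (fst sk) (snd sk) $ l * c sk) = 0"
    and sk: "sk \<in> S \<times> {..<r}"
  shows "c sk = 0"
proof -
  define x where "x u l = (if u \<in> S then (\<Sum>k<r. c (u,k) * b u k $ l) else 0)" for u l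
  have x_fixed: "(\<Sum>t<d. P u $$ (l,t) * x u t) = x u l" if u: "u < n" and l: "l < d" for u l
  proof (cases "u \<in> S")
    case True
    have "(\<Sum>t<d. P u $$ (l,t) * x u t) = (\<Sum>k<r. \<Sum>t<d. c (u,k) * (P u $$ (l,t) * b u k $ t))"
      unfolding x_def using True
      by (subst sum.swap) (simp add: sum_distrib_left mult.commute mult.left_commute)
    also have "\<dots> = (\<Sum>k<r. c (u,k) * b u k $ l)"
      using b_fixed[OF u _ l] by (simp add: sum_distrib_left[symmetric])
    finally show ?thesis unfolding x_def using True by simp
  qed (simp add: x_def)
  have x_0: "x u l = 0" if "u < n" "l < d" for u l
  proof (rule projector_family_vanishes[OF rep support S x_fixed _ _ that])
    show "x u l = 0" if "u < n" "u \<notin> S" "l < d" for u l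
      using that by (simp add: x_def)
    show "coord (\<lambda>u. x u l) i = 0" if i: "i < n" "ev i < 0" and l: "l < d" for i l
    proof -
      have "coord (\<lambda>u. x u l) i = (\<Sum>s\<in>S. q i s * x s l)"
        unfolding coord_def by (rule sum.mono_neutral_right) (use S in \<open>auto simp: x_def\<close>)
      also have "\<dots> = (\<Sum>s\<in>S. \<Sum>k<r. q i s * b s k $ l * c (s,k))"
        unfolding x_def by (simp add: sum_distrib_left mult.commute mult.left_commute)
      also have "\<dots> = (\<Sum>sk\<in>S \<times> {..<r}. q i (fst sk) * b (fst sk) (snd sk) $ l * c sk)"
        by (subst sum.cartesian_product) (simp add: case_prod_beta)
      also have "\<dots> = 0" using c i l by simp
      finally show ?thesis .
    qed
  qed
  obtain s k where sk: "sk = (s,k)" "s \<in> S" "k < r" using sk by auto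
  hence s: "s < n" using S(1) by auto
  have "\<forall>l<d. (\<Sum>k<r. c (s,k) * b s k $ l) = 0"
    using x_0[OF s] sk(2) unfolding x_def by simp
  from b_indep[OF s this] show "c sk = 0" using sk by simp
qed

lemma indep_columns_card_mult_le:
  assumes rep: "dr_representation n E d r P"
    and support: "\<And>u w. u < n \<Longrightarrow> w < n \<Longrightarrow> a u w \<noteq> 0 \<Longrightarrow> E u w"
    and S: "S \<subseteq> {..<n}" "indep_columns n a S"
  shows "card S * r \<le> card {i. i < n \<and> ev i < 0} * d"
proof -
  obtain b :: "nat \<Rightarrow> nat \<Rightarrow> complex vec"
    where b_fixed: "\<And>v k l. v < n \<Longrightarrow> k < r \<Longrightarrow> l < d \<Longrightarrow> (\<Sum>t<d. P v $$ (l,t) * b v k $ t) = b v k $ l"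
    and b_indep: "\<And>v c. v < n \<Longrightarrow> \<forall>l<d. (\<Sum>k<r. c k * b v k $ l) = 0 \<Longrightarrow> \<forall>k<r. c k = 0"
    using representation_bases[OF rep] by blast
  let ?Neg = "{i. i < n \<and> ev i < 0}"
  have "card (S \<times> {..<r}) \<le> card (?Neg \<times> {..<d})"
  proof (rule card_le_of_injective_linear_map[of _ _ "\<lambda>(i,l) sk. q i (fst sk) * b (fst sk) (snd sk) $ l"])
    show "finite (?Neg \<times> {..<d})" by simp
    show "finite (S \<times> {..<r})" using finite_subset[OF S(1)] by simp
    fix c :: "nat \<times> nat \<Rightarrow> complex"
    assume c: "\<forall>il\<in>?Neg \<times> {..<d}. (\<Sum>sk\<in>S \<times> {..<r}.
      (case il of (i,l) \<Rightarrow> \<lambda>sk. q i (fst sk) * b (fst sk) (snd sk) $ l) sk * c sk) = 0"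
    show "\<forall>sk\<in>S \<times> {..<r}. c sk = 0"
    proof
      fix sk assume "sk \<in> S \<times> {..<r}"
      show "c sk = 0"
      proof (rule representation_coeffs_vanish[OF rep support S b_fixed b_indep _ \<open>sk \<in> S \<times> {..<r}\<close>])
        fix i l assume "i < n" "ev i < 0" "l < d"
        hence "(i,l) \<in> ?Neg \<times> {..<d}" by simp
        with c have "(\<Sum>sk\<in>S \<times> {..<r}.
            (case (i,l) of (i,l) \<Rightarrow> \<lambda>sk. q i (fst sk) * b (fst sk) (snd sk) $ l) sk * c sk) = 0"
          by (rule bspec)
        thus "(\<Sum>sk\<in>S \<times> {..<r}. q i (fst sk) * b (fst sk) (snd sk) $ l * c sk) = 0" by simp
      qed
    qed
  qed
  thus ?thesis by (simp add: card_cartesian_product)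
qed

lemma card_nonzero_ev_mult_le:
  assumes rep: "dr_representation n E d r P"
    and support: "\<And>u w. u < n \<Longrightarrow> w < n \<Longrightarrow> a u w \<noteq> 0 \<Longrightarrow> E u w"
  shows "card {i. i < n \<and> ev i \<noteq> 0} * r \<le> card {i. i < n \<and> ev i < 0} * d"
proof -
  obtain S and co :: "nat \<Rightarrow> nat \<Rightarrow> complex" where S: "S \<subseteq> {..<n}" "indep_columns n a S"
    and span: "\<And>u v. u < n \<Longrightarrow> v < n \<Longrightarrow> of_real (a v u) = (\<Sum>s\<in>S. co u s * of_real (a v s))"
    using exists_spanning_indep_columns[of n a] by blast
  have "card {i. i < n \<and> ev i \<noteq> 0} * r \<le> card S * r"
    using card_nonzero_ev_le_card_spanning[OF S(1) span] by simp
  also have "\<dots> \<le> card {i. i < n \<and> ev i < 0} * d"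
    by (rule indep_columns_card_mult_le[OF rep support S])
  finally show ?thesis .
qed

end


lemma sum_order_eq_card:
  fixes p :: "real poly" and ev :: "nat \<Rightarrow> real"
  assumes "p \<noteq> 0" and order: "\<And>x. order x p = card {i. i < n \<and> ev i = x}"
  shows "(\<Sum>x\<in>{x. Q x \<and> poly p x = 0}. order x p) = card {i. i < n \<and> Q (ev i)}"
proof -
  let ?R = "{x. Q x \<and> poly p x = 0}"
  have "finite ?R" using poly_roots_finite[OF \<open>p \<noteq> 0\<close>] by (rule rev_finite_subset) auto
  have "(\<Sum>x\<in>?R. order x p) = card (\<Union>x\<in>?R. {i. i < n \<and> ev i = x})"
    unfolding order using \<open>finite ?R\<close> by (intro card_UN_disjoint[symmetric]) auto
  also have "(\<Union>x\<in>?R. {i. i < n \<and> ev i = x}) = {i. i < n \<and> Q (ev i)}"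
  proof (intro equalityI subsetI)
    fix i assume i: "i \<in> {i. i < n \<and> Q (ev i)}"
    hence "order (ev i) p \<noteq> 0" unfolding order by (subst card_0_eq) auto
    hence "poly p (ev i) = 0" using order_root by blast
    thus "i \<in> (\<Union>x\<in>?R. {i. i < n \<and> ev i = x})" using i by auto
  qed auto
  finally show ?thesis .
qed

lemma adjacency_matrix_eigen_count:
  assumes G: "simple_graph n E" and rep: "dr_representation n E d r P"
  defines "A \<equiv> adjacency_matrix n E"
  shows "(n_pos_eig A + n_neg_eig A) * r \<le> n_neg_eig A * d"
    and "(n_pos_eig A + n_neg_eig A) * r \<le> n_pos_eig A * d"
proof -
  have A: "A \<in> carrier_mat n n" unfolding A_def adjacency_matrix_def by simp
  have A_index: "A $$ (i,j) = (if E i j then 1 else 0)" if "i < n" "j < n" for i j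
    using that unfolding A_def adjacency_matrix_def by simp
  have sym: "A $$ (i,j) = A $$ (j,i)" if "i < n" "j < n" for i j
    using G that unfolding A_index[OF that] A_index[OF that(2,1)] simple_graph_def by metis
  obtain p q ev where basis: "sym_eigenbasis n (\<lambda>u w. A $$ (u,w)) p q ev"
    and order: "\<And>x. order x (char_poly A) = card {i. i < n \<and> ev i = x}"
    using symmetric_matrix_eigenbasis[OF A sym] by blast
  have "char_poly A \<noteq> 0" using degree_monic_char_poly[OF A] by auto
  note count = sum_order_eq_card[OF this order]
  have pos: "n_pos_eig A = card {i. i < n \<and> ev i > 0}"
    unfolding n_pos_eig_def using count[of "\<lambda>x. x > 0"] by simp
  have neg: "n_neg_eig A = card {i. i < n \<and> ev i < 0}"
    unfolding n_neg_eig_def using count[of "\<lambda>x. x < 0"] by simp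
  have nonzero: "card {i. i < n \<and> ev i \<noteq> 0} = n_pos_eig A + n_neg_eig A"
  proof -
    have "{i. i < n \<and> ev i \<noteq> 0} = {i. i < n \<and> ev i > 0} \<union> {i. i < n \<and> ev i < 0}" by auto
    thus ?thesis unfolding pos neg by (simp add: card_Un_disjoint[symmetric] disjoint_iff)
  qed
  have support: "\<And>u w. u < n \<Longrightarrow> w < n \<Longrightarrow> A $$ (u,w) \<noteq> 0 \<Longrightarrow> E u w"
    and support_uminus: "\<And>u w. u < n \<Longrightarrow> w < n \<Longrightarrow> - A $$ (u,w) \<noteq> 0 \<Longrightarrow> E u w"
    using A_index by (auto split: if_splits)
  show "(n_pos_eig A + n_neg_eig A) * r \<le> n_neg_eig A * d"
    using sym_eigenbasis.card_nonzero_ev_mult_le[OF basis rep support] nonzero neg by simp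
  have "{i. i < n \<and> - ev i \<noteq> 0} = {i. i < n \<and> ev i \<noteq> 0}" "{i. i < n \<and> - ev i < 0} = {i. i < n \<and> ev i > 0}"
    by auto
  thus "(n_pos_eig A + n_neg_eig A) * r \<le> n_pos_eig A * d"
    using sym_eigenbasis.card_nonzero_ev_mult_le[OF sym_eigenbasis.sym_eigenbasis_uminus[OF basis] rep
        support_uminus] nonzero pos by simp
qed


definition diag_projector :: "nat \<Rightarrow> nat set \<Rightarrow> complex mat" where
  "diag_projector d C = mat d d (\<lambda>(i,j). if i = j \<and> i \<in> C then 1 else 0)"

lemma diag_projector_mult: "diag_projector d C * diag_projector d C' = diag_projector d (C \<inter> C')"
proof (rule eq_matI)
  fix i j assume "i < dim_row (diag_projector d (C \<inter> C'))" "j < dim_col (diag_projector d (C \<inter> C'))"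
  hence ij: "i < d" "j < d" by (auto simp: diag_projector_def)
  have "(diag_projector d C * diag_projector d C') $$ (i,j) =
      (\<Sum>k\<in>{0..<d}. (if i = k \<and> i \<in> C then 1 else 0) * (if k = j \<and> k \<in> C' then 1 else (0::complex)))"
    using ij by (simp add: diag_projector_def scalar_prod_def)
  also have "\<dots> = (\<Sum>k\<in>{0..<d}. if k = i then (if i = j \<and> i \<in> C \<inter> C' then 1 else 0) else 0)"
    by (intro sum.cong refl) auto
  also have "\<dots> = diag_projector d (C \<inter> C') $$ (i,j)"
    using ij by (simp add: sum.delta diag_projector_def)
  finally show "(diag_projector d C * diag_projector d C') $$ (i,j) = diag_projector d (C \<inter> C') $$ (i,j)" .
qed (auto simp: diag_projector_def)

lemma orth_projector_diag_projector: "orth_projector d (diag_projector d C)"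
  unfolding orth_projector_def diag_projector_mult
  by (auto simp: diag_projector_def mat_adjoint_def mat_of_rows_def intro!: eq_matI)

lemma rank_le_card_if_cols_subset:
  fixes A :: "'a::field mat"
  assumes A: "A \<in> carrier_mat n nc" and cols: "set (cols A) \<subseteq> insert (0\<^sub>v n) U" and "finite U"
  shows "vec_space.rank n A \<le> card U"
proof -
  interpret vec_space "TYPE('a)" n .
  have "lin_indpt {}" unfolding lin_dep_def by auto
  then obtain S where S: "finite S" "maximal S (\<lambda>T. T \<subseteq> set (cols A) \<and> lin_indpt T)"
    using maximal_exists_superset[of "set (cols A)" "\<lambda>T. T \<subseteq> set (cols A) \<and> lin_indpt T" "{}"]
    by auto
  have S_cols: "S \<subseteq> set (cols A)" and S_indpt: "lin_indpt S" using S(2) unfolding maximal_def by auto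
  have "S \<subseteq> carrier_vec n" using S_cols A by (auto simp: cols_def)
  hence "0\<^sub>v n \<notin> S" using zero_nin_lin_indpt[OF _ S_indpt] class_semiring.one_zeroI by auto
  hence "S \<subseteq> U" using S_cols cols by auto
  hence "card S \<le> card U" by (rule card_mono[OF \<open>finite U\<close>])
  thus ?thesis using rank_card_indpt[OF A S(2)] by simp
qed

lemma rank_diag_projector:
  assumes C: "C \<subseteq> {..<d}"
  shows "vec_space.rank d (diag_projector d C) = card C"
proof -
  interpret vec_space "TYPE(complex)" d .
  let ?D = "diag_projector d C"
  have D: "?D \<in> carrier_mat d d" unfolding diag_projector_def by simp
  have "col ?D j = (if j \<in> C then unit_vec d j else 0\<^sub>v d)" if "j < d" for j
    using that unfolding diag_projector_def by (intro eq_vecI) (auto simp: unit_vec_def)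
  hence cols: "set (cols ?D) = (\<lambda>j. if j \<in> C then unit_vec d j else 0\<^sub>v d) ` {..<d}"
    using D by (auto simp: cols_def)
  have units: "unit_vec d ` C \<subseteq> set (cols ?D)" unfolding cols using C by force
  have "lin_indpt (set (unit_vecs d))" using unit_vecs_basis unfolding basis_def by simp
  hence units_indpt: "lin_indpt (unit_vec d ` C)"
    by (rule subset_li_is_li) (use C in \<open>auto simp: unit_vecs_def\<close>)
  have "inj_on (unit_vec d :: nat \<Rightarrow> complex vec) C"
    using C by (auto simp: inj_on_def unit_vec_eq)
  hence card_units: "card (unit_vec d ` C :: complex vec set) = card C" by (rule card_image)
  have cols_units: "set (cols ?D) \<subseteq> insert (0\<^sub>v d) (unit_vec d ` C)" unfolding cols by auto
  have "finite (unit_vec d ` C :: complex vec set)" using C finite_subset by blast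
  with D cols_units have "rank ?D \<le> card (unit_vec d ` C :: complex vec set)"
    by (rule rank_le_card_if_cols_subset)
  moreover have "card (unit_vec d ` C :: complex vec set) \<le> rank ?D"
    by (rule rank_ge_card_indpt[OF D units units_indpt])
  ultimately show ?thesis using card_units by simp
qed

lemma dr_representation_of_cover:
  assumes indep: "\<And>k. k < d \<Longrightarrow> J k \<in> indep_sets n E"
    and cover: "\<And>v. v < n \<Longrightarrow> r \<le> card {k. k < d \<and> v \<in> J k}"
  shows "\<exists>P. dr_representation n E d r P"
proof -
  have "\<forall>v\<in>{..<n}. \<exists>C. C \<subseteq> {k. k < d \<and> v \<in> J k} \<and> card C = r"
    using cover by (auto intro: obtain_subset_with_card_n)
  from bchoice[OF this] obtain C where C: "\<forall>v\<in>{..<n}. C v \<subseteq> {k. k < d \<and> v \<in> J k} \<and> card (C v) = r"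
    by (elim exE)
  show ?thesis
    unfolding dr_representation_def
  proof (intro exI[of _ "\<lambda>v. diag_projector d (C v)"] conjI allI impI)
    fix v assume "v < n"
    thus "orth_projector d (diag_projector d (C v))" "vec_space.rank d (diag_projector d (C v)) = r"
      using C orth_projector_diag_projector rank_diag_projector[of "C v" d] by auto
  next
    fix v w assume v: "v < n" and w: "w < n" and "E v w"
    have "C v \<inter> C w = {}"
    proof (rule ccontr)
      assume "C v \<inter> C w \<noteq> {}"
      then obtain k where "k < d" "v \<in> J k" "w \<in> J k" using C v w by blast
      with indep \<open>E v w\<close> show False unfolding indep_sets_def by blast
    qed
    thus "diag_projector d (C v) * diag_projector d (C w) = 0\<^sub>m d d"
      unfolding diag_projector_mult by (auto simp: diag_projector_def)
  qed
qed

lemma finite_indep_sets: "finite (indep_sets n E)"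
proof -
  have "indep_sets n E \<subseteq> Pow {0..<n}" unfolding indep_sets_def by auto
  thus ?thesis using finite_subset by blast
qed

text \<open>Scaling a fractional colouring by N and rounding up lists every independent set J
  \<lceil>N \<sigma>(J)\<rceil> times; each vertex lies in at least N of the listed sets.\<close>

lemma dr_representation_of_frac_colouring:
  fixes \<sigma> :: "nat set \<Rightarrow> real"
  assumes nonneg: "\<And>J. J \<in> indep_sets n E \<Longrightarrow> \<sigma> J \<ge> 0"
    and cover: "\<And>v. v < n \<Longrightarrow> (\<Sum>J\<in>{J\<in>indep_sets n E. v \<in> J}. \<sigma> J) \<ge> 1"
  shows "\<exists>d. (\<exists>P. dr_representation n E d N P) \<and>
    real d \<le> real N * (\<Sum>J\<in>indep_sets n E. \<sigma> J) + real (card (indep_sets n E))"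
proof -
  let ?I = "indep_sets n E"
  obtain Js where Js: "set Js = ?I" "distinct Js" using finite_distinct_list[OF finite_indep_sets] by blast
  define m where "m J = nat \<lceil>real N * \<sigma> J\<rceil>" for J
  define L where "L = concat (map (\<lambda>J. replicate (m J) J) Js)"
  have m_upper: "real (m J) \<le> real N * \<sigma> J + 1" if "J \<in> ?I" for J
  proof -
    have "real N * \<sigma> J \<ge> 0" using nonneg[OF that] by simp
    thus ?thesis unfolding m_def by linarith
  qed
  have m_lower: "real N * \<sigma> J \<le> real (m J)" for J unfolding m_def by linarith
  have "real (length L) = (\<Sum>J\<in>?I. real (m J))"
    unfolding L_def using Js by (simp add: length_concat o_def sum_list_distinct_conv_sum_set)
  also have "\<dots> \<le> (\<Sum>J\<in>?I. real N * \<sigma> J + 1)" by (rule sum_mono) (rule m_upper)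
  also have "\<dots> = real N * (\<Sum>J\<in>?I. \<sigma> J) + real (card ?I)" by (simp add: sum.distrib sum_distrib_left)
  finally have length_L: "real (length L) \<le> real N * (\<Sum>J\<in>?I. \<sigma> J) + real (card ?I)" .
  have "L ! k \<in> ?I" if "k < length L" for k
    using nth_mem[OF that] Js unfolding L_def by (auto split: if_splits)
  moreover have "N \<le> card {k. k < length L \<and> v \<in> L ! k}" if v: "v < n" for v
  proof -
    have "card {k. k < length L \<and> v \<in> L ! k} = length (filter (\<lambda>J. v \<in> J) L)"
      by (simp add: length_filter_conv_card)
    also have "\<dots> = (\<Sum>J\<leftarrow>Js. if v \<in> J then m J else 0)"
      unfolding L_def by (induction Js) auto
    also have "\<dots> = (\<Sum>J\<in>{J\<in>?I. v \<in> J}. m J)"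
      using Js finite_indep_sets by (simp add: sum_list_distinct_conv_sum_set sum.inter_filter)
    finally have "real (card {k. k < length L \<and> v \<in> L ! k}) = (\<Sum>J\<in>{J\<in>?I. v \<in> J}. real (m J))"
      by simp
    moreover have "real N \<le> (\<Sum>J\<in>{J\<in>?I. v \<in> J}. real N * \<sigma> J)"
      using cover[OF v] by (simp add: sum_distrib_left[symmetric] mult_le_cancel_left1)
    moreover have "\<dots> \<le> (\<Sum>J\<in>{J\<in>?I. v \<in> J}. real (m J))" by (rule sum_mono) (rule m_lower)
    ultimately show ?thesis by linarith
  qed
  ultimately have "\<exists>P. dr_representation n E (length L) N P" by (rule dr_representation_of_cover)
  with length_L show ?thesis by blast
qed


lemma dr_representation_trivial:
  assumes "simple_graph n E"
  shows "\<exists>P. dr_representation n E n 1 P"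
proof (rule dr_representation_of_cover)
  show "{k} \<in> indep_sets n E" if "k < n" for k
    using assms that unfolding indep_sets_def simple_graph_def by auto
  show "1 \<le> card {k. k < n \<and> v \<in> {k}}" if "v < n" for v
  proof -
    have "{k. k < n \<and> v \<in> {k}} = {v}" using that by auto
    thus ?thesis by simp
  qed
qed

lemma exists_frac_colouring:
  assumes G: "simple_graph n E"
  shows "\<exists>\<sigma> :: nat set \<Rightarrow> real. (\<forall>J\<in>indep_sets n E. \<sigma> J \<ge> 0) \<and>
    (\<forall>v<n. (\<Sum>J\<in>{J\<in>indep_sets n E. v \<in> J}. \<sigma> J) \<ge> 1)"
proof (intro exI[of _ "\<lambda>J. if card J = 1 then 1 else 0"] conjI ballI allI impI)
  fix v assume v: "v < n"
  have "{v} \<in> {J\<in>indep_sets n E. v \<in> J}" using G v unfolding indep_sets_def simple_graph_def by auto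
  hence "(if card {v} = 1 then 1 else 0) \<le> (\<Sum>J\<in>{J\<in>indep_sets n E. v \<in> J}. if card J = 1 then 1 else (0::real))"
    by (rule member_le_sum) (auto simp: finite_indep_sets)
  thus "1 \<le> (\<Sum>J\<in>{J\<in>indep_sets n E. v \<in> J}. if card J = 1 then 1 else (0::real))" by simp
qed simp

lemma projective_rank_le_frac_colouring:
  fixes \<sigma> :: "nat set \<Rightarrow> real"
  assumes nonneg: "\<forall>J\<in>indep_sets n E. \<sigma> J \<ge> 0"
    and cover: "\<forall>v<n. (\<Sum>J\<in>{J\<in>indep_sets n E. v \<in> J}. \<sigma> J) \<ge> 1"
  shows "projective_rank n E \<le> (\<Sum>J\<in>indep_sets n E. \<sigma> J)"
proof (rule field_le_epsilon)
  let ?I = "indep_sets n E"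
  define R where "R = {real d / real r | d r. r > 0 \<and> (\<exists>P. dr_representation n E d r P)}"
  have R_bdd: "bdd_below R" unfolding R_def by (rule bdd_belowI[of _ 0]) auto
  fix e :: real assume e: "0 < e"
  obtain N :: nat where N: "real (card ?I) / e < real N" using reals_Archimedean2 by blast
  have "real (card ?I) / e \<ge> 0" using e by simp
  hence "0 < N" using N by (cases N) auto
  obtain d where "\<exists>P. dr_representation n E d N P"
    and d: "real d \<le> real N * (\<Sum>J\<in>?I. \<sigma> J) + real (card ?I)"
    using dr_representation_of_frac_colouring[of n E \<sigma> N] nonneg cover by blast
  hence "real d / real N \<in> R" unfolding R_def using \<open>0 < N\<close> by blast
  hence "projective_rank n E \<le> real d / real N"
    unfolding projective_rank_def R_def[symmetric] by (rule cInf_lower[OF _ R_bdd])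
  also have "\<dots> \<le> (real N * (\<Sum>J\<in>?I. \<sigma> J) + real (card ?I)) / real N"
    using d by (intro divide_right_mono) auto
  also have "\<dots> = (\<Sum>J\<in>?I. \<sigma> J) + real (card ?I) / real N"
    using \<open>0 < N\<close> by (simp add: add_divide_distrib)
  also have "\<dots> \<le> (\<Sum>J\<in>?I. \<sigma> J) + e"
    using N e \<open>0 < N\<close> by (simp add: divide_le_eq field_simps)
  finally show "projective_rank n E \<le> (\<Sum>J\<in>?I. \<sigma> J) + e" .
qed

lemma projective_rank_le_frac_chromatic:
  assumes "simple_graph n E"
  shows "projective_rank n E \<le> frac_chromatic n E"
  unfolding frac_chromatic_def
proof (rule cInf_greatest)
  obtain \<sigma> :: "nat set \<Rightarrow> real" where "\<forall>J\<in>indep_sets n E. \<sigma> J \<ge> 0"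
    and "\<forall>v<n. (\<Sum>J\<in>{J\<in>indep_sets n E. v \<in> J}. \<sigma> J) \<ge> 1"
    using exists_frac_colouring[OF assms] by blast
  thus "{(\<Sum>J\<in>indep_sets n E. \<sigma> J :: real) | \<sigma>. (\<forall>J\<in>indep_sets n E. \<sigma> J \<ge> 0) \<and>
      (\<forall>v<n. (\<Sum>J\<in>{J\<in>indep_sets n E. v \<in> J}. \<sigma> J) \<ge> 1)} \<noteq> {}" by blast
next
  fix y assume "y \<in> {(\<Sum>J\<in>indep_sets n E. \<sigma> J :: real) | \<sigma>. (\<forall>J\<in>indep_sets n E. \<sigma> J \<ge> 0) \<and>
      (\<forall>v<n. (\<Sum>J\<in>{J\<in>indep_sets n E. v \<in> J}. \<sigma> J) \<ge> 1)}"
  then obtain \<sigma> :: "nat set \<Rightarrow> real" where "y = (\<Sum>J\<in>indep_sets n E. \<sigma> J)"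
    and "\<forall>J\<in>indep_sets n E. \<sigma> J \<ge> 0" and "\<forall>v<n. (\<Sum>J\<in>{J\<in>indep_sets n E. v \<in> J}. \<sigma> J) \<ge> 1"
    by blast
  thus "projective_rank n E \<le> y" using projective_rank_le_frac_colouring by simp
qed

lemma one_plus_div_le_div:
  fixes x m r d :: real
  assumes "m > 0" "r > 0" "(x + m) * r \<le> m * d"
  shows "1 + x / m \<le> d / r"
proof -
  have "(x + m) / m \<le> d / r" using assms by (simp add: divide_le_eq le_divide_eq field_simps)
  moreover have "(x + m) / m = 1 + x / m" using assms by (simp add: field_simps)
  ultimately show ?thesis by simp
qed

lemma dr_representation_ratio_ge:
  assumes G: "simple_graph n E" and rep: "dr_representation n E d r P" and "0 < r" "0 < n"
  defines "p \<equiv> real (n_pos_eig (adjacency_matrix n E))" and "m \<equiv> real (n_neg_eig (adjacency_matrix n E))"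
  shows "1 + max (p / m) (m / p) \<le> real d / real r"
proof -
  have bounds: "(p + m) * r \<le> m * d" "(p + m) * r \<le> p * d"
    unfolding p_def m_def using adjacency_matrix_eigen_count[OF G rep] by (simp_all flip: of_nat_add of_nat_mult)
  have "r \<le> d"
  proof -
    have "P 0 \<in> carrier_mat d d" "vec_space.rank d (P 0) = r"
      using rep \<open>0 < n\<close> unfolding dr_representation_def orth_projector_def by auto
    thus ?thesis using vec_space.rank_le_nc by metis
  qed
  hence "1 \<le> real d / real r" using \<open>0 < r\<close> by simp
  show ?thesis
  proof (cases "p = 0 \<or> m = 0")
    case True
    hence "(p + m) * r \<le> 0" using bounds by auto
    hence "p + m \<le> 0" using \<open>0 < r\<close> by (simp add: mult_le_0_iff)
    hence "p = 0 \<and> m = 0" unfolding p_def m_def by simp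
    thus ?thesis using \<open>1 \<le> real d / real r\<close> by simp
  next
    case False
    hence "p > 0" "m > 0" unfolding p_def m_def by auto
    thus ?thesis using \<open>0 < r\<close> bounds one_plus_div_le_div[of m r p d] one_plus_div_le_div[of p r m d]
      by (simp add: add.commute)
  qed
qed

lemma projective_rank_ge:
  assumes G: "simple_graph n E" and "0 < n"
  shows "1 + max (real (n_pos_eig (adjacency_matrix n E)) / real (n_neg_eig (adjacency_matrix n E)))
                 (real (n_neg_eig (adjacency_matrix n E)) / real (n_pos_eig (adjacency_matrix n E)))
    \<le> projective_rank n E"
  unfolding projective_rank_def
proof (rule cInf_greatest)
  show "{real d / real r |d r. 0 < r \<and> (\<exists>P. dr_representation n E d r P)} \<noteq> {}"
    using dr_representation_trivial[OF G] by fastforce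
next
  fix x assume "x \<in> {real d / real r |d r. 0 < r \<and> (\<exists>P. dr_representation n E d r P)}"
  then obtain d r P where "x = real d / real r" "0 < r" "dr_representation n E d r P" by blast
  thus "1 + max (real (n_pos_eig (adjacency_matrix n E)) / real (n_neg_eig (adjacency_matrix n E)))
                 (real (n_neg_eig (adjacency_matrix n E)) / real (n_pos_eig (adjacency_matrix n E))) \<le> x"
    using dr_representation_ratio_ge[OF G _ _ \<open>0 < n\<close>] by simp
qed

theorem corollary1p10:
  fixes n :: nat and E :: "nat \<Rightarrow> nat \<Rightarrow> bool"
  assumes "simple_graph n E" and "\<exists>i j. E i j"
  shows "frac_chromatic n E \<ge> projective_rank n E \<and>
         projective_rank n E \<ge> 1 + max (real (n_pos_eig (adjacency_matrix n E)) / real (n_neg_eig (adjacency_matrix n E)))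
                                          (real (n_neg_eig (adjacency_matrix n E)) / real (n_pos_eig (adjacency_matrix n E)))"
proof -
  obtain i j where "E i j" using assms(2) by blast
  hence "0 < n" using assms(1) unfolding simple_graph_def by fastforce
  thus ?thesis
    using projective_rank_le_frac_chromatic[OF assms(1)] projective_rank_ge[OF assms(1)] by simp
qed

end
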